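(* Let $a,b,c\in\mathbb{R}$ with $ac>0$ and $b^2-4ac>0$. Let $\{P_m(z)\}_{m\geq 0}$ be the sequence of functions of $z$ generated by \[ \sum_{m=0}^\infty P_m(z)\, t^m=\frac{1}{(at^2+bt+c)(1-tz)}. \] Then for every $m\geq 0$, no zero of $P_m(z)$ lies in the closed disk $\{z\in\mathbb{C}: |z|\leq 1/|\alpha|\}$, where $\alpha$ is the zero of $at^2+bt+c$ of smallest modulus.
   Context: A sequence $\{P_m(z)\}$ is generated by $f(t,z)$ if, for each $z\in\mathbb{C}$, $f(t,z)$ is analytic in $t$ in a neighborhood of $t=0$ and $P_m(z)$ is the coefficient of $t^m$ in the power series expansion of $f(t,z)$ in $t$ about $0$. *)

theory Defs
  imports "HOL-Analysis.Analysis"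
begin

definition generated_by ::
  "(complex \<Rightarrow> complex \<Rightarrow> complex) \<Rightarrow> (nat \<Rightarrow> complex \<Rightarrow> complex) \<Rightarrow> bool" where
  "generated_by f P \<longleftrightarrow>
     (\<forall>z. (\<lambda>t. f t z) analytic_on {0} \<and>
          (\<forall>m. P m z = (deriv ^^ m) (\<lambda>t. f t z) 0 / fact m))"

end

theory Submission
  imports Defs
begin

text \<open>
  Let \<open>\<beta>\<close> be the other root. Both roots are real of the same sign, so with
  \<open>\<sigma> = \<alpha>/\<beta> \<in> (0,1)\<close> the generating function is
  \<open>1 / (c (1 - t/\<alpha>)(1 - t/\<beta>)(1 - tz))\<close>, and expanding the three geometric series gives
  \<open>c \<alpha>\<^sup>m P\<^sub>m(z) = \<Sum>\<^sub>i A\<^sub>i (\<alpha>z)\<^sup>i\<close> with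
  \<open>A\<^sub>i = 1 + \<sigma> + \<dots> + \<sigma>\<^sup>m\<^sup>-\<^sup>i\<close>. These coefficients are positive and strictly
  decreasing, so by the Enestroem-Kakeya theorem the polynomial has no zero with \<open>|\<alpha>z| \<le> 1\<close>.
\<close>

lemma one_minus_times_sum_powers:
  fixes A :: "nat \<Rightarrow> 'a::comm_ring_1"
  shows "(1 - w) * (\<Sum>j\<le>m. A j * w^j)
    = A 0 - (\<Sum>j<m. (A j - A (Suc j)) * w^Suc j) - A m * w^Suc m"
  by (induction m) (simp_all add: algebra_simps)

lemma Re_less_one_in_unit_disc:
  fixes w :: complex
  assumes "cmod w \<le> 1" and "w \<noteq> 1"
  shows "Re w < 1"
proof (rule ccontr)
  assume "\<not> Re w < 1"
  with assms(1) complex_Re_le_cmod[of w] have "Re w = 1" "cmod w = 1" by linarith+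
  then have "Im w = 0"
    using cmod_power2[of w] by simp
  with \<open>Re w = 1\<close> assms(2) show False by (simp add: complex_eq_iff)
qed

lemma enestrom_kakeya:
  fixes A :: "nat \<Rightarrow> real" and w :: complex
  assumes decreasing: "\<And>j. j < m \<Longrightarrow> A (Suc j) < A j" and "A m > 0" and "cmod w \<le> 1"
  shows "(\<Sum>j\<le>m. of_real (A j) * w^j) \<noteq> 0"
proof
  assume root: "(\<Sum>j\<le>m. of_real (A j) * w^j) = 0"
  show False
  proof (cases "w = 1")
    case True
    have "A j > 0" if "j \<le> m" for j
      using that by (induction rule: inc_induct) (use \<open>A m > 0\<close> decreasing in force)+
    then have "0 < (\<Sum>j\<le>m. A j)" by (intro sum_pos) auto
    also have "\<dots> = Re (\<Sum>j\<le>m. of_real (A j) * w^j)" using True by simp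
    finally show False using root by simp
  next
    case False
    have Re_power_le: "Re (w^k) \<le> 1" for k
      using complex_Re_le_cmod[of "w^k"] \<open>cmod w \<le> 1\<close>
      by (metis norm_power power_le_one norm_ge_zero order_trans)
    have "m > 0" using root \<open>A m > 0\<close> by (cases m) auto
    have "of_real (A 0) = (\<Sum>j<m. of_real (A j - A (Suc j)) * w^Suc j) + of_real (A m) * w^Suc m"
      using one_minus_times_sum_powers[of w "\<lambda>j. of_real (A j)" m] root by (simp add: algebra_simps)
    from arg_cong[OF this, of Re]
    have "A 0 = (\<Sum>j<m. (A j - A (Suc j)) * Re (w^Suc j)) + A m * Re (w^Suc m)"
      by (simp add: Re_sum)
    also have "\<dots> < (\<Sum>j<m. A j - A (Suc j)) + A m"
    proof (rule add_less_le_mono)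
      show "(\<Sum>j<m. (A j - A (Suc j)) * Re (w^Suc j)) < (\<Sum>j<m. A j - A (Suc j))"
      proof (rule sum_strict_mono_ex1)
        show "\<forall>j\<in>{..<m}. (A j - A (Suc j)) * Re (w^Suc j) \<le> A j - A (Suc j)"
          using decreasing Re_power_le by (simp add: mult_left_le less_imp_le del: power_Suc)
        show "\<exists>j\<in>{..<m}. (A j - A (Suc j)) * Re (w^Suc j) < A j - A (Suc j)"
          using \<open>m > 0\<close> decreasing[of 0] Re_less_one_in_unit_disc[OF \<open>cmod w \<le> 1\<close> False]
          by (intro bexI[of _ 0]) auto
      qed simp
      show "A m * Re (w^Suc m) \<le> A m"
        using \<open>A m > 0\<close> Re_power_le by (simp add: mult_left_le less_imp_le del: power_Suc)
    qed
    also have "\<dots> = A 0" by (simp add: sum_lessThan_telescope')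
    finally show False by simp
  qed
qed

lemma complete_homogeneous_sum_nonzero:
  fixes p q :: real and z :: complex
  assumes "p * q > 0" and "\<bar>q\<bar> < \<bar>p\<bar>" and "cmod z \<le> \<bar>p\<bar>"
  shows "(\<Sum>i\<le>m. z^i * (\<Sum>j\<le>m-i. of_real q^j * of_real p^(m-i-j))) \<noteq> 0"
proof -
  define \<sigma> where "\<sigma> = q / p"
  define w where "w = z / of_real p"
  define A where "A i = (\<Sum>j\<le>m-i. \<sigma>^j)" for i
  have "p \<noteq> 0" using assms(1) by auto
  have "0 < \<sigma>" using assms(1) by (auto simp: \<sigma>_def zero_less_divide_iff zero_less_mult_iff)
  then have "\<sigma> = \<bar>q\<bar> / \<bar>p\<bar>" by (metis \<sigma>_def abs_divide abs_of_pos)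
  then have "\<sigma> < 1" using assms(2) by simp
  have "cmod w \<le> 1" using assms(3) \<open>p \<noteq> 0\<close> by (simp add: w_def norm_divide divide_le_eq_1)
  have "z^i * (\<Sum>j\<le>m-i. of_real q^j * of_real p^(m-i-j)) = of_real p^m * (of_real (A i) * w^i)"
    if "i \<le> m" for i
  proof -
    have "(\<Sum>j\<le>m-i. of_real q^j * of_real p^(m-i-j)) = (of_real p :: complex)^(m-i) * of_real (A i)"
      unfolding A_def of_real_sum sum_distrib_left
    proof (rule sum.cong)
      fix j assume "j \<in> {..m-i}"
      then have "(of_real p :: complex)^(m-i) = of_real p^j * of_real p^(m-i-j)"
        by (metis atMost_iff le_add_diff_inverse power_add)
      then show "of_real q^j * of_real p^(m-i-j) = (of_real p :: complex)^(m-i) * of_real (\<sigma>^j)"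
        using \<open>p \<noteq> 0\<close> by (simp add: \<sigma>_def power_divide)
    qed simp
    moreover have "z^i * (of_real p :: complex)^(m-i) = of_real p^m * w^i"
      using that \<open>p \<noteq> 0\<close> by (simp add: w_def power_divide field_simps flip: power_add)
    ultimately show ?thesis by (simp add: algebra_simps)
  qed
  then have "(\<Sum>i\<le>m. z^i * (\<Sum>j\<le>m-i. of_real q^j * of_real p^(m-i-j)))
      = of_real p^m * (\<Sum>i\<le>m. of_real (A i) * w^i)"
    by (simp add: sum_distrib_left)
  moreover have "(\<Sum>i\<le>m. of_real (A i) * w^i) \<noteq> 0"
  proof (rule enestrom_kakeya[OF _ _ \<open>cmod w \<le> 1\<close>])
    fix j assume "j < m"
    then have "m - j = Suc (m - Suc j)" by simp
    then have "A j = A (Suc j) + \<sigma>^(m-j)" by (simp add: A_def)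
    then show "A (Suc j) < A j" using \<open>0 < \<sigma>\<close> by simp
  qed (simp add: A_def)
  ultimately show ?thesis using \<open>p \<noteq> 0\<close> by simp
qed

lemma geometric_has_fps_expansion:
  "(\<lambda>t::complex. 1 / (1 - u * t)) has_fps_expansion Abs_fps (\<lambda>n. u^n)"
proof -
  have "(\<lambda>t. inverse (1 - u * t)) has_fps_expansion inverse (1 - fps_const u * fps_X)"
    by (intro fps_expansion_intros) simp
  also have "inverse (1 - fps_const u * fps_X) = Abs_fps (\<lambda>n. u^n)"
    using one_minus_const_fps_X_neg_power'[of 1 u] by simp
  finally show ?thesis by (simp add: divide_inverse)
qed

lemma taylor_coeff_reciprocal_linear_factors:
  fixes C p q z :: complex
  shows "(deriv ^^ m) (\<lambda>t. 1 / (C * (1 - p*t) * (1 - q*t) * (1 - z*t))) 0 / fact m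
    = (\<Sum>i\<le>m. z^i * (\<Sum>j\<le>m-i. q^j * p^(m-i-j))) / C"
proof -
  let ?F = "fps_const (1 / C) * (Abs_fps (\<lambda>n. z^n) * (Abs_fps (\<lambda>n. q^n) * Abs_fps (\<lambda>n. p^n)))"
  have factored: "(\<lambda>t. 1 / (C * (1 - p*t) * (1 - q*t) * (1 - z*t)))
      = (\<lambda>t. 1 / C * (1 / (1 - z*t) * (1 / (1 - q*t) * (1 / (1 - p*t)))))"
    by (simp add: fun_eq_iff)
  have "(\<lambda>t. 1 / (C * (1 - p*t) * (1 - q*t) * (1 - z*t))) has_fps_expansion ?F"
    unfolding factored
    by (intro has_fps_expansion_cmult_left has_fps_expansion_mult geometric_has_fps_expansion)
  then have "fps_nth ?F m = (deriv ^^ m) (\<lambda>t. 1 / (C * (1 - p*t) * (1 - q*t) * (1 - z*t))) 0 / fact m"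
    by (rule fps_nth_fps_expansion)
  moreover have "fps_nth ?F m = (\<Sum>i\<le>m. z^i * (\<Sum>j\<le>m-i. q^j * p^(m-i-j))) / C"
    unfolding fps_mult_left_const_nth by (simp add: fps_mult_nth atLeast0AtMost)
  ultimately show ?thesis by simp
qed

lemma real_quadratic_other_root:
  fixes a b c \<alpha> :: real
  assumes "a * c > 0" and "b^2 - 4 * a * c > 0" and "a * \<alpha>^2 + b * \<alpha> + c = 0"
  obtains \<beta> where "a * \<beta>^2 + b * \<beta> + c = 0" and "\<alpha> * \<beta> > 0" and "\<bar>\<alpha>\<bar> \<noteq> \<bar>\<beta>\<bar>"
    and "\<And>t::complex. of_real a * t^2 + of_real b * t + of_real c
           = of_real c * (1 - of_real (1 / \<alpha>) * t) * (1 - of_real (1 / \<beta>) * t)"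
proof
  define \<beta> where "\<beta> = c / (a * \<alpha>)"
  have "a \<noteq> 0" "c \<noteq> 0" using assms(1) by auto
  then have "\<alpha> \<noteq> 0" using assms(3) by auto
  have product: "c = a * (\<alpha> * \<beta>)" using \<open>a \<noteq> 0\<close> \<open>\<alpha> \<noteq> 0\<close> by (simp add: \<beta>_def)
  have "(b + a * (\<alpha> + \<beta>)) * \<alpha> = 0"
    using assms(3) unfolding product by (simp add: algebra_simps power2_eq_square)
  then have sum: "b = - a * (\<alpha> + \<beta>)" using \<open>\<alpha> \<noteq> 0\<close> by (simp add: eq_neg_iff_add_eq_0)
  have "\<beta> \<noteq> 0" using \<open>c \<noteq> 0\<close> product by auto
  show "a * \<beta>^2 + b * \<beta> + c = 0"
    unfolding sum product by (simp add: algebra_simps power2_eq_square)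
  have "a * c = a^2 * (\<alpha> * \<beta>)" unfolding product by (simp add: power2_eq_square)
  then show same_sign: "\<alpha> * \<beta> > 0"
    using assms(1) by (simp add: zero_less_mult_iff)
  have "b^2 - 4 * a * c = (a * (\<alpha> - \<beta>))^2"
    unfolding sum product by (simp add: algebra_simps power2_eq_square)
  with assms(2) same_sign show "\<bar>\<alpha>\<bar> \<noteq> \<bar>\<beta>\<bar>"
    by (auto simp: abs_eq_iff)
  fix t :: complex
  show "of_real a * t^2 + of_real b * t + of_real c
      = of_real c * (1 - of_real (1 / \<alpha>) * t) * (1 - of_real (1 / \<beta>) * t)"
    unfolding sum product using \<open>\<alpha> \<noteq> 0\<close> \<open>\<beta> \<noteq> 0\<close>
    by (simp add: field_simps power2_eq_square)
qed

theorem theorem2: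
  fixes a b c :: real and P :: "nat \<Rightarrow> complex \<Rightarrow> complex" and \<alpha> :: real
  assumes "a * c > 0" and "b^2 - 4 * a * c > 0"
    and "generated_by
           (\<lambda>t z. 1 / ((of_real a * t^2 + of_real b * t + of_real c) * (1 - t * z))) P"
    and "a * \<alpha>^2 + b * \<alpha> + c = 0"
    and "\<forall>\<beta>::complex. of_real a * \<beta>^2 + of_real b * \<beta> + of_real c = 0 \<longrightarrow> \<bar>\<alpha>\<bar> \<le> cmod \<beta>"
  shows "\<forall>m z. cmod z \<le> 1 / \<bar>\<alpha>\<bar> \<longrightarrow> P m z \<noteq> 0"
proof (intro allI impI)
  fix m z assume "cmod z \<le> 1 / \<bar>\<alpha>\<bar>"
  obtain \<beta> where root: "a * \<beta>^2 + b * \<beta> + c = 0" and "\<alpha> * \<beta> > 0" "\<bar>\<alpha>\<bar> \<noteq> \<bar>\<beta>\<bar>"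
    and factor: "\<And>t::complex. of_real a * t^2 + of_real b * t + of_real c
           = of_real c * (1 - of_real (1 / \<alpha>) * t) * (1 - of_real (1 / \<beta>) * t)"
    using real_quadratic_other_root assms(1,2,4) by blast
  have "\<bar>\<alpha>\<bar> < \<bar>\<beta>\<bar>"
    using assms(5)[rule_format, of "of_real \<beta>"] arg_cong[OF root, of "of_real :: real \<Rightarrow> complex"]
      \<open>\<bar>\<alpha>\<bar> \<noteq> \<bar>\<beta>\<bar>\<close>
    by simp
  have "(\<lambda>t. 1 / ((of_real a * t^2 + of_real b * t + of_real c) * (1 - t * z)))
      = (\<lambda>t. 1 / (of_real c * (1 - of_real (1 / \<alpha>) * t) * (1 - of_real (1 / \<beta>) * t) * (1 - z * t)))"
    unfolding factor by (simp add: ac_simps)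
  then have "P m z = (deriv ^^ m)
      (\<lambda>t. 1 / (of_real c * (1 - of_real (1 / \<alpha>) * t) * (1 - of_real (1 / \<beta>) * t) * (1 - z * t))) 0
      / fact m"
    using assms(3) unfolding generated_by_def by metis
  also have "\<dots> = (\<Sum>i\<le>m. z^i * (\<Sum>j\<le>m-i. of_real (1 / \<beta>)^j * of_real (1 / \<alpha>)^(m-i-j)))
      / of_real c"
    by (rule taylor_coeff_reciprocal_linear_factors)
  also have "\<dots> \<noteq> 0"
  proof -
    have "\<bar>1 / \<beta>\<bar> < \<bar>1 / \<alpha>\<bar>"
      using \<open>\<bar>\<alpha>\<bar> < \<bar>\<beta>\<bar>\<close> \<open>\<alpha> * \<beta> > 0\<close> frac_less2[of 1 1 "\<bar>\<alpha>\<bar>" "\<bar>\<beta>\<bar>"]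
      by (cases "\<alpha> = 0") auto
    then show ?thesis
      using complete_homogeneous_sum_nonzero[of "1 / \<alpha>" "1 / \<beta>" z m] assms(1)
        \<open>\<alpha> * \<beta> > 0\<close> \<open>cmod z \<le> 1 / \<bar>\<alpha>\<bar>\<close>
      by auto
  qed
  finally show "P m z \<noteq> 0" .
qed

end
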